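(* Let $e$ be a closed term with $\vdash e:\perp\to X$, where $X$ is a propositional variable. Then for each term $u$ and each finite sequence of terms $\bar v$, $(e\;u)\;\bar v\triangleright^*\underline{\mu}.u$, i.e. $(e\;u)\;\bar v$ reduces to some element of $M_u$.
   Context: $\lambda\mu$-terms: $t::= x\mid \lambda x.t\mid (t\;t)\mid \mu a.t\mid (a\;t)$ over disjoint infinite sets of $\lambda$-variables and $\mu$-variables; types built from propositional variables and $\perp$ with $\to$. Reduction $(\lambda x.u\;v)\triangleright u[x:=v]$, $(\mu a.u\;v)\triangleright\mu a.u[a:=^*v]$ ($u[a:=^*v]$ replaces each subterm $(a\;w)$ of $u$ by $(a\;(w\;v))$), $\triangleright^*$ its reflexive transitive compatible closure. Typing rules: (ax) $\Gamma\vdash x:A;\Delta$ if $x:A\in\Gamma$; ($\to_i$) from $\Gamma,x:A\vdash t:B;\Delta$ infer $\Gamma\vdash\lambda x.t:A\to B;\Delta$; ($\to_e$) from $\Gamma\vdash u:A\to B;\Delta$, $\Gamma\vdash v:A;\Delta$ infer $\Gamma\vdash(u\;v):B;\Delta$; ($\mu$) from $\Gamma\vdash t:\perp;\Delta,a:A$ infer $\Gamma\vdash\mu a.t:A;\Delta$; ($\perp$) from $\Gamma\vdash t:A;\Delta,a:A$ infer $\Gamma\vdash(a\;t):\perp;\Delta,a:A$; $\vdash$ means empty contexts. For a sequence $\bar v=v_1\dots v_n$, $t\;\bar v=((t\;v_1)\dots v_n)$. For a term $t$, $M_t$ is the smallest set containing $t$ such that $w\in M_t$ and $a$ a $\mu$-variable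 imply $\mu a.w\in M_t$ and $(a\;w)\in M_t$; $\underline{\mu}.t$ denotes an arbitrary element of $M_t$. *)

theory Defs
  imports Main
begin

text \<open>Lambda-mu terms in de Bruijn notation, with two disjoint sorts of
indices: lambda-variables (bound by Lam) and mu-variables (bound by Mu).
  Var i      : lambda-variable x
  Lam t      : \<lambda>x.t
  App t s    : (t s)
  Mu t       : \<mu>a.t
  Named a t  : (a t)\<close>

datatype trm = Var nat | Lam trm | App trm trm | Mu trm | Named nat trm

datatype ty = PV nat | Bot | Arr ty ty

fun liftL :: "nat \<Rightarrow> trm \<Rightarrow> trm" where
  "liftL k (Var i) = (if i < k then Var i else Var (Suc i))"
| "liftL k (Lam t) = Lam (liftL (Suc k) t)"
| "liftL k (App t s) = App (liftL k t) (liftL k s)"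
| "liftL k (Mu t) = Mu (liftL k t)"
| "liftL k (Named a t) = Named a (liftL k t)"

fun liftM :: "nat \<Rightarrow> trm \<Rightarrow> trm" where
  "liftM k (Var i) = Var i"
| "liftM k (Lam t) = Lam (liftM k t)"
| "liftM k (App t s) = App (liftM k t) (liftM k s)"
| "liftM k (Mu t) = Mu (liftM (Suc k) t)"
| "liftM k (Named a t) = Named (if a < k then a else Suc a) (liftM k t)"

fun substL :: "nat \<Rightarrow> trm \<Rightarrow> trm \<Rightarrow> trm" where
  "substL k v (Var i) = (if i < k then Var i else if i = k then v else Var (i - 1))"
| "substL k v (Lam t) = Lam (substL (Suc k) (liftL 0 v) t)"
| "substL k v (App t s) = App (substL k v t) (substL k v s)"
| "substL k v (Mu t) = Mu (substL k (liftM 0 v) t)"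
| "substL k v (Named a t) = Named a (substL k v t)"

fun substM :: "nat \<Rightarrow> trm \<Rightarrow> trm \<Rightarrow> trm" where
  "substM k v (Var i) = Var i"
| "substM k v (Lam t) = Lam (substM k (liftL 0 v) t)"
| "substM k v (App t s) = App (substM k v t) (substM k v s)"
| "substM k v (Mu t) = Mu (substM (Suc k) (liftM 0 v) t)"
| "substM k v (Named a t) =
     (if a = k then Named a (App (substM k v t) v) else Named a (substM k v t))"

inductive red1 :: "trm \<Rightarrow> trm \<Rightarrow> bool" where
  beta: "red1 (App (Lam u) v) (substL 0 v u)"
| mu:   "red1 (App (Mu u) v) (Mu (substM 0 (liftM 0 v) u))"
| lam:  "red1 t t' \<Longrightarrow> red1 (Lam t) (Lam t')"
| appL: "red1 t t' \<Longrightarrow> red1 (App t s) (App t' s)"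
| appR: "red1 s s' \<Longrightarrow> red1 (App t s) (App t s')"
| muC:  "red1 t t' \<Longrightarrow> red1 (Mu t) (Mu t')"
| named: "red1 t t' \<Longrightarrow> red1 (Named a t) (Named a t')"

abbreviation red :: "trm \<Rightarrow> trm \<Rightarrow> bool" where
  "red \<equiv> red1\<^sup>*\<^sup>*"

inductive typing :: "ty list \<Rightarrow> ty list \<Rightarrow> trm \<Rightarrow> ty \<Rightarrow> bool" where
  ax:   "i < length \<Gamma> \<Longrightarrow> \<Gamma> ! i = A \<Longrightarrow> typing \<Gamma> \<Delta> (Var i) A"
| arrI: "typing (A # \<Gamma>) \<Delta> t B \<Longrightarrow> typing \<Gamma> \<Delta> (Lam t) (Arr A B)"
| arrE: "typing \<Gamma> \<Delta> u (Arr A B) \<Longrightarrow> typing \<Gamma> \<Delta> v A \<Longrightarrow> typing \<Gamma> \<Delta> (App u v) B"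
| muI:  "typing \<Gamma> (A # \<Delta>) t Bot \<Longrightarrow> typing \<Gamma> \<Delta> (Mu t) A"
| botI: "a < length \<Delta> \<Longrightarrow> \<Delta> ! a = A \<Longrightarrow> typing \<Gamma> \<Delta> t A \<Longrightarrow> typing \<Gamma> \<Delta> (Named a t) Bot"

text \<open>In de Bruijn form, \<mu>a.w (with a fresh for t, as under the
variable convention) belongs to M_t iff w belongs to M of t with its mu-indices
shifted.\<close>

inductive inM :: "trm \<Rightarrow> trm \<Rightarrow> bool" where
  base:  "inM t t"
| named: "inM t w \<Longrightarrow> inM t (Named a w)"
| mu:    "inM (liftM 0 t) w \<Longrightarrow> inM t (Mu w)"

definition apps :: "trm \<Rightarrow> trm list \<Rightarrow> trm" where
  "apps t vs = foldl App t vs"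

definition closed :: "trm \<Rightarrow> bool" where
  "closed t \<longleftrightarrow> liftL 0 t = t \<and> liftM 0 t = t"

end

theory Submission
  imports Defs
begin

text \<open>A realizability argument. Let the pole be the set of terms that reduce to an element of
\<open>M\<^sub>x\<close> for a fixed \<lambda>-variable \<open>x\<close>; interpret \<open>\<perp>\<close> by the pole, a propositional variable by the
terms that reach the pole against every stack, and \<open>A \<rightarrow> B\<close> by the terms sending realizers of
\<open>A\<close> to realizers of \<open>B\<close>. By adequacy every closed term of type \<open>\<perp> \<rightarrow> X\<close> realizes it. Since
\<open>x\<close> is in the pole, \<open>(e x) v\<^sub>1 \<dots> v\<^sub>n\<close> reduces to some \<open>w \<in> M\<^sub>x\<close>, and substituting \<open>u\<close> for
\<open>x\<close> turns this reduction into \<open>(e u) v\<^sub>1 \<dots> v\<^sub>n \<triangleright>\<^sup>* w[x:=u] \<in> M\<^sub>u\<close>.\<close>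

subsection \<open>Renaming of \<mu>-variables\<close>

definition up_ren :: "(nat \<Rightarrow> nat) \<Rightarrow> nat \<Rightarrow> nat" where
  "up_ren r a = (case a of 0 \<Rightarrow> 0 | Suc b \<Rightarrow> Suc (r b))"

lemma up_ren_simps [simp]: "up_ren r 0 = 0" "up_ren r (Suc b) = Suc (r b)"
  by (auto simp: up_ren_def)

lemma up_ren_comp: "up_ren r \<circ> up_ren r' = up_ren (r \<circ> r')"
  by (auto simp: fun_eq_iff up_ren_def split: nat.splits)

lemma up_ren_id: "up_ren (\<lambda>a. a) = (\<lambda>a. a)"
  by (auto simp: fun_eq_iff up_ren_def split: nat.splits)

fun renameM :: "(nat \<Rightarrow> nat) \<Rightarrow> trm \<Rightarrow> trm" where
  "renameM r (Var i) = Var i"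
| "renameM r (Lam t) = Lam (renameM r t)"
| "renameM r (App t s) = App (renameM r t) (renameM r s)"
| "renameM r (Mu t) = Mu (renameM (up_ren r) t)"
| "renameM r (Named a t) = Named (r a) (renameM r t)"

lemma renameM_renameM: "renameM r (renameM r' t) = renameM (r \<circ> r') t"
  by (induction t arbitrary: r r') (simp_all add: up_ren_comp [symmetric])

lemma renameM_id [simp]: "renameM (\<lambda>a. a) t = t"
  by (induction t) (auto simp: up_ren_id)

lemma liftM_eq_renameM: "liftM k t = renameM (\<lambda>a. if a < k then a else Suc a) t"
proof (induction t arbitrary: k)
  case (Mu t)
  have "up_ren (\<lambda>a. if a < k then a else Suc a) = (\<lambda>a. if a < Suc k then a else Suc a)"
    by (auto simp: fun_eq_iff up_ren_def split: nat.splits)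
  with Mu show ?case by simp
qed auto

lemma liftM_0 [simp]: "liftM 0 t = renameM Suc t"
  by (simp add: liftM_eq_renameM)

lemma renameM_up_ren_Suc: "renameM (up_ren r) (renameM Suc t) = renameM Suc (renameM r t)"
proof -
  have "up_ren r \<circ> Suc = Suc \<circ> r"
    by auto
  then show ?thesis
    by (simp add: renameM_renameM)
qed

lemma renameM_liftL: "renameM r (liftL k t) = liftL k (renameM r t)"
  by (induction t arbitrary: k r) auto

lemma liftL_liftL: "i \<le> j \<Longrightarrow> liftL (Suc j) (liftL i s) = liftL i (liftL j s)"
  by (induction s arbitrary: i j) auto

lemma substL_liftL: "substL k s (liftL k t) = t"
  by (induction t arbitrary: k s) auto

lemma liftL_substL:
  "j \<le> k \<Longrightarrow> liftL j (substL k s t) = substL (Suc k) (liftL j s) (liftL j t)"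
  by (induction t arbitrary: j k s) (auto simp: liftL_liftL renameM_liftL)

lemma renameM_substL: "renameM r (substL k s t) = substL k (renameM r s) (renameM r t)"
  by (induction t arbitrary: r k s) (auto simp: renameM_liftL renameM_up_ren_Suc)

lemma substL_substL:
  "j \<le> k \<Longrightarrow>
   substL k s (substL j v u) = substL j (substL k s v) (substL (Suc k) (liftL j s) u)"
proof (induction u arbitrary: j k s v)
  case (Var i)
  then show ?case by (auto simp: substL_liftL)
next
  case (Lam u)
  then show ?case by (simp add: liftL_substL liftL_liftL)
next
  case (Mu u)
  then show ?case by (simp add: renameM_substL renameM_liftL)
qed auto

fun mu_fresh :: "nat \<Rightarrow> trm \<Rightarrow> bool" where
  "mu_fresh k (Var i) = True"
| "mu_fresh k (Lam t) = mu_fresh k t"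
| "mu_fresh k (App t s) = (mu_fresh k t \<and> mu_fresh k s)"
| "mu_fresh k (Mu t) = mu_fresh (Suc k) t"
| "mu_fresh k (Named a t) = (a \<noteq> k \<and> mu_fresh k t)"

lemma substM_mu_fresh: "mu_fresh k t \<Longrightarrow> substM k v t = t"
  by (induction t arbitrary: k v) auto

lemma mu_fresh_liftL: "mu_fresh k t \<Longrightarrow> mu_fresh k (liftL j t)"
  by (induction t arbitrary: k j) auto

lemma mu_fresh_renameM:
  "mu_fresh k t \<Longrightarrow> (\<And>a. r a = k' \<Longrightarrow> a = k) \<Longrightarrow> mu_fresh k' (renameM r t)"
proof (induction t arbitrary: k k' r)
  case (Mu t)
  have "\<And>a. up_ren r a = Suc k' \<Longrightarrow> a = Suc k"
    using Mu.prems(2) by (auto simp: up_ren_def split: nat.splits)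
  with Mu show ?case by simp
qed auto

lemma mu_fresh_renameM_Suc: "mu_fresh k t \<Longrightarrow> mu_fresh (Suc k) (renameM Suc t)"
  by (erule mu_fresh_renameM) auto

lemma mu_fresh_renameM_outside_range: "(\<And>a. r a \<noteq> k) \<Longrightarrow> mu_fresh k (renameM r t)"
proof (induction t arbitrary: k r)
  case (Mu t)
  have "\<And>a. up_ren r a \<noteq> Suc k"
    using Mu.prems by (auto simp: up_ren_def split: nat.splits)
  with Mu show ?case by simp
qed auto

lemma substL_substM:
  "mu_fresh j s \<Longrightarrow> substL k s (substM j w u) = substM j (substL k s w) (substL k s u)"
proof (induction u arbitrary: j k s w)
  case (Var i)
  then show ?case by (auto simp: substM_mu_fresh)
next
  case (Lam u)
  then show ?case by (simp add: liftL_substL mu_fresh_liftL)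
next
  case (Mu u)
  then show ?case by (simp add: renameM_substL mu_fresh_renameM_Suc)
qed auto

lemma renameM_substM:
  assumes "\<forall>a. r a = k' \<longleftrightarrow> a = k"
  shows "renameM r (substM k v u) = substM k' (renameM r v) (renameM r u)"
  using assms
proof (induction u arbitrary: r k k' v)
  case (Mu u)
  have "\<forall>a. up_ren r a = Suc k' \<longleftrightarrow> a = Suc k"
    using Mu.prems by (auto simp: up_ren_def split: nat.splits)
  with Mu.IH show ?case by (simp add: renameM_up_ren_Suc)
qed (auto simp: renameM_liftL)

lemma red1_renameM: "red1 t t' \<Longrightarrow> red1 (renameM r t) (renameM r t')"
proof (induction t t' arbitrary: r rule: red1.induct)
  case (beta u v)
  then show ?case
    using red1.beta [of "renameM r u" "renameM r v"] by (simp add: renameM_substL)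
next
  case (mu u v)
  have "renameM (up_ren r) (substM 0 (renameM Suc v) u)
      = substM 0 (renameM Suc (renameM r v)) (renameM (up_ren r) u)"
    by (subst renameM_substM [where k' = 0])
       (auto simp: up_ren_def renameM_up_ren_Suc split: nat.splits)
  then show ?case
    using red1.mu [of "renameM (up_ren r) u" "renameM r v"] by simp
qed (auto intro: red1.intros)

lemma red1_substL: "red1 t t' \<Longrightarrow> red1 (substL k s t) (substL k s t')"
proof (induction t t' arbitrary: k s rule: red1.induct)
  case (beta u v)
  then show ?case
    using red1.beta [of "substL (Suc k) (liftL 0 s) u" "substL k s v"] by (simp add: substL_substL)
next
  case (mu u v)
  have "substL k (renameM Suc s) (substM 0 (renameM Suc v) u)
      = substM 0 (renameM Suc (substL k s v)) (substL k (renameM Suc s) u)"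
    by (simp add: substL_substM mu_fresh_renameM_outside_range renameM_substL)
  then show ?case
    using red1.mu [of "substL k (renameM Suc s) u" "substL k s v"] by simp
qed (auto intro: red1.intros)

lemma red_renameM: "red t t' \<Longrightarrow> red (renameM r t) (renameM r t')"
  by (induction rule: rtranclp_induct) (auto intro: rtranclp.rtrancl_into_rtrancl red1_renameM)

lemma red_substL: "red t t' \<Longrightarrow> red (substL k s t) (substL k s t')"
  by (induction rule: rtranclp_induct) (auto intro: rtranclp.rtrancl_into_rtrancl red1_substL)

lemma red_AppL: "red t t' \<Longrightarrow> red (App t s) (App t' s)"
  by (induction rule: rtranclp_induct) (auto intro: rtranclp.rtrancl_into_rtrancl red1.appL)

lemma red_Mu: "red t t' \<Longrightarrow> red (Mu t) (Mu t')"
  by (induction rule: rtranclp_induct) (auto intro: rtranclp.rtrancl_into_rtrancl red1.muC)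

lemma red_Named: "red t t' \<Longrightarrow> red (Named a t) (Named a t')"
  by (induction rule: rtranclp_induct) (auto intro: rtranclp.rtrancl_into_rtrancl red1.named)

lemma apps_simps [simp]:
  "apps t [] = t" "apps t (x # xs) = apps (App t x) xs" "apps t (xs @ [x]) = App (apps t xs) x"
  by (auto simp: apps_def)

lemma red_apps: "red t t' \<Longrightarrow> red (apps t vs) (apps t' vs)"
  by (induction vs arbitrary: t t') (auto intro: red_AppL)

lemma renameM_apps: "renameM r (apps t vs) = apps (renameM r t) (map (renameM r) vs)"
  by (induction vs arbitrary: t) auto

lemma substL_apps: "substL k s (apps t vs) = apps (substL k s t) (map (substL k s) vs)"
  by (induction vs arbitrary: t) auto

lemma substM_apps: "substM k s (apps t vs) = apps (substM k s t) (map (substM k s) vs)"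
  by (induction vs arbitrary: t) auto

subsection \<open>Simultaneous substitution\<close>

definition cons_subst :: "trm \<Rightarrow> (nat \<Rightarrow> trm) \<Rightarrow> nat \<Rightarrow> trm" where
  "cons_subst s \<sigma> i = (case i of 0 \<Rightarrow> s | Suc j \<Rightarrow> \<sigma> j)"

lemma cons_subst_simps [simp]: "cons_subst s \<sigma> 0 = s" "cons_subst s \<sigma> (Suc j) = \<sigma> j"
  by (auto simp: cons_subst_def)

definition cons_stack :: "trm list \<Rightarrow> (nat \<Rightarrow> trm list) \<Rightarrow> nat \<Rightarrow> trm list" where
  "cons_stack ws \<rho> a = (case a of 0 \<Rightarrow> ws | Suc b \<Rightarrow> \<rho> b)"

lemma cons_stack_simps [simp]: "cons_stack ws \<rho> 0 = ws" "cons_stack ws \<rho> (Suc b) = \<rho> b"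
  by (auto simp: cons_stack_def)

text \<open>The substitution of the adequacy lemma: \<open>\<sigma>\<close> for the \<lambda>-variables, simultaneously the
structural substitution of the stack \<open>\<rho> a\<close> for each \<mu>-variable \<open>a\<close>, followed by the renaming
\<open>\<nu>\<close> of \<mu>-variables.\<close>

fun par_subst :: "(nat \<Rightarrow> trm) \<Rightarrow> (nat \<Rightarrow> trm list) \<Rightarrow> (nat \<Rightarrow> nat) \<Rightarrow> trm \<Rightarrow> trm" where
  "par_subst \<sigma> \<rho> \<nu> (Var i) = \<sigma> i"
| "par_subst \<sigma> \<rho> \<nu> (Lam t) =
     Lam (par_subst (cons_subst (Var 0) (\<lambda>i. liftL 0 (\<sigma> i))) (\<lambda>a. map (liftL 0) (\<rho> a)) \<nu> t)"
| "par_subst \<sigma> \<rho> \<nu> (App t s) = App (par_subst \<sigma> \<rho> \<nu> t) (par_subst \<sigma> \<rho> \<nu> s)"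
| "par_subst \<sigma> \<rho> \<nu> (Mu t) =
     Mu (par_subst (\<lambda>i. renameM Suc (\<sigma> i)) (cons_stack [] (\<lambda>a. map (renameM Suc) (\<rho> a)))
       (up_ren \<nu>) t)"
| "par_subst \<sigma> \<rho> \<nu> (Named a t) = Named (\<nu> a) (apps (par_subst \<sigma> \<rho> \<nu> t) (\<rho> a))"

lemma renameM_par_subst:
  "renameM r (par_subst \<sigma> \<rho> \<nu> t) =
   par_subst (\<lambda>i. renameM r (\<sigma> i)) (\<lambda>a. map (renameM r) (\<rho> a)) (\<lambda>a. r (\<nu> a)) t"
proof (induction t arbitrary: r \<sigma> \<rho> \<nu>)
  case (Lam t)
  have "(\<lambda>i. renameM r (cons_subst (Var 0) (\<lambda>i. liftL 0 (\<sigma> i)) i))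
      = cons_subst (Var 0) (\<lambda>i. liftL 0 (renameM r (\<sigma> i)))"
    by (auto simp: fun_eq_iff cons_subst_def renameM_liftL split: nat.splits)
  moreover have "(\<lambda>a. map (renameM r) (map (liftL 0) (\<rho> a)))
      = (\<lambda>a. map (liftL 0) (map (renameM r) (\<rho> a)))"
    by (simp add: comp_def renameM_liftL)
  ultimately show ?case using Lam by simp
next
  case (Mu t)
  have "(\<lambda>a. map (renameM (up_ren r)) (cons_stack [] (\<lambda>a. map (renameM Suc) (\<rho> a)) a))
      = cons_stack [] (\<lambda>a. map (renameM Suc) (map (renameM r) (\<rho> a)))"
    by (auto simp: fun_eq_iff cons_stack_def renameM_up_ren_Suc split: nat.splits)
  moreover have "(\<lambda>a. up_ren r (up_ren \<nu> a)) = up_ren (\<lambda>a. r (\<nu> a))"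
    by (auto simp: fun_eq_iff up_ren_def split: nat.splits)
  ultimately show ?case using Mu by (simp add: renameM_up_ren_Suc)
next
  case (Named a t)
  then show ?case by (simp add: renameM_apps)
qed auto

lemma substL_par_subst:
  "substL k s (par_subst \<sigma> \<rho> \<nu> t) =
   par_subst (\<lambda>i. substL k s (\<sigma> i)) (\<lambda>a. map (substL k s) (\<rho> a)) \<nu> t"
proof (induction t arbitrary: k s \<sigma> \<rho> \<nu>)
  case (Lam t)
  have "(\<lambda>i. substL (Suc k) (liftL 0 s) (cons_subst (Var 0) (\<lambda>i. liftL 0 (\<sigma> i)) i))
      = cons_subst (Var 0) (\<lambda>i. liftL 0 (substL k s (\<sigma> i)))"
    by (auto simp: fun_eq_iff cons_subst_def liftL_substL split: nat.splits)
  moreover have "(\<lambda>a. map (substL (Suc k) (liftL 0 s)) (map (liftL 0) (\<rho> a)))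
      = (\<lambda>a. map (liftL 0) (map (substL k s) (\<rho> a)))"
    by (simp add: comp_def liftL_substL)
  ultimately show ?case using Lam by simp
next
  case (Mu t)
  have "(\<lambda>a. map (substL k (renameM Suc s)) (cons_stack [] (\<lambda>a. map (renameM Suc) (\<rho> a)) a))
      = cons_stack [] (\<lambda>a. map (renameM Suc) (map (substL k s) (\<rho> a)))"
    by (auto simp: fun_eq_iff cons_stack_def renameM_substL split: nat.splits)
  with Mu show ?case by (simp add: renameM_substL)
next
  case (Named a t)
  then show ?case by (simp add: substL_apps)
qed auto

lemma substM_par_subst:
  assumes "\<forall>i. mu_fresh k (\<sigma> i)" and "\<forall>a. \<forall>x\<in>set (\<rho> a). mu_fresh k x"
  shows "substM k v (par_subst \<sigma> \<rho> \<nu> t) =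
    par_subst \<sigma> (\<lambda>a. if \<nu> a = k then \<rho> a @ [v] else \<rho> a) \<nu> t"
  using assms
proof (induction t arbitrary: k v \<sigma> \<rho> \<nu>)
  case (Var i)
  then show ?case by (simp add: substM_mu_fresh)
next
  case (Lam t)
  have "\<forall>i. mu_fresh k (cons_subst (Var 0) (\<lambda>i. liftL 0 (\<sigma> i)) i)"
    using Lam.prems by (auto simp: cons_subst_def mu_fresh_liftL split: nat.splits)
  moreover have "\<forall>a. \<forall>x\<in>set (map (liftL 0) (\<rho> a)). mu_fresh k x"
    using Lam.prems by (auto simp: mu_fresh_liftL)
  ultimately show ?case
    using Lam.IH by (simp add: if_distrib [of "map (liftL 0)"] cong: if_cong)
next
  case (Mu t)
  have "\<forall>i. mu_fresh (Suc k) (renameM Suc (\<sigma> i))"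
    using Mu.prems by (auto simp: mu_fresh_renameM_Suc)
  moreover have "\<forall>a. \<forall>x\<in>set (cons_stack [] (\<lambda>a. map (renameM Suc) (\<rho> a)) a). mu_fresh (Suc k) x"
    using Mu.prems by (auto simp: cons_stack_def mu_fresh_renameM_Suc split: nat.splits)
  moreover have
    "(\<lambda>a. if up_ren \<nu> a = Suc k then cons_stack [] (\<lambda>a. map (renameM Suc) (\<rho> a)) a @ [renameM Suc v]
          else cons_stack [] (\<lambda>a. map (renameM Suc) (\<rho> a)) a)
     = cons_stack [] (\<lambda>a. map (renameM Suc) (if \<nu> a = k then \<rho> a @ [v] else \<rho> a))"
    by (auto simp: fun_eq_iff cons_stack_def up_ren_def split: nat.splits)
  ultimately show ?case using Mu.IH by simp
next
  case (App t1 t2)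
  then show ?case by simp
next
  case (Named a t)
  have "map (substM k v) (\<rho> a) = \<rho> a"
    using Named.prems(2) by (auto intro: map_idI substM_mu_fresh)
  with Named show ?case by (simp add: substM_apps)
qed


lemma substL_par_subst_cons_subst:
  "substL 0 s (par_subst (cons_subst (Var 0) (\<lambda>i. liftL 0 (\<sigma> i))) (\<lambda>a. map (liftL 0) (\<rho> a)) \<nu> t)
   = par_subst (cons_subst s \<sigma>) \<rho> \<nu> t"
proof -
  have "(\<lambda>i. substL 0 s (cons_subst (Var 0) (\<lambda>i. liftL 0 (\<sigma> i)) i)) = cons_subst s \<sigma>"
    by (auto simp: fun_eq_iff cons_subst_def substL_liftL split: nat.splits)
  moreover have "(\<lambda>a. map (substL 0 s) (map (liftL 0) (\<rho> a))) = \<rho>"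
    by (simp add: comp_def substL_liftL)
  ultimately show ?thesis
    by (simp add: substL_par_subst)
qed

lemma red1_App_par_subst_Lam:
  "red1 (App (par_subst \<sigma> \<rho> \<nu> (Lam t)) s) (par_subst (cons_subst s \<sigma>) \<rho> \<nu> t)"
  using red1.beta [of "par_subst (cons_subst (Var 0) (\<lambda>i. liftL 0 (\<sigma> i))) (\<lambda>a. map (liftL 0) (\<rho> a)) \<nu> t" s]
  by (simp only: par_subst.simps substL_par_subst_cons_subst)

lemma red_apps_Mu_par_subst:
  assumes "\<forall>i. mu_fresh 0 (\<sigma> i)" and "\<forall>a. \<forall>x\<in>set (\<rho> a). mu_fresh 0 x"
    and "\<forall>a. \<nu> a = 0 \<longleftrightarrow> a = 0"
  shows "red (apps (Mu (par_subst \<sigma> \<rho> \<nu> t)) ws)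
    (Mu (par_subst \<sigma> (\<rho>(0 := \<rho> 0 @ map (renameM Suc) ws)) \<nu> t))"
  using assms(2)
proof (induction ws arbitrary: \<rho>)
  case Nil
  then show ?case by simp
next
  case (Cons w ws)
  let ?\<rho>' = "\<rho>(0 := \<rho> 0 @ [renameM Suc w])"
  have "substM 0 (renameM Suc w) (par_subst \<sigma> \<rho> \<nu> t)
      = par_subst \<sigma> (\<lambda>a. if \<nu> a = 0 then \<rho> a @ [renameM Suc w] else \<rho> a) \<nu> t"
    using assms(1) Cons.prems by (rule substM_par_subst)
  also have "(\<lambda>a. if \<nu> a = 0 then \<rho> a @ [renameM Suc w] else \<rho> a) = ?\<rho>'"
    using assms(3) by (auto simp: fun_eq_iff)
  finally have step: "substM 0 (renameM Suc w) (par_subst \<sigma> \<rho> \<nu> t) = par_subst \<sigma> ?\<rho>' \<nu> t" .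
  have "red1 (App (Mu (par_subst \<sigma> \<rho> \<nu> t)) w) (Mu (par_subst \<sigma> ?\<rho>' \<nu> t))"
    using red1.mu [of "par_subst \<sigma> \<rho> \<nu> t" w] by (simp only: liftM_0 step)
  then have "red (apps (Mu (par_subst \<sigma> \<rho> \<nu> t)) (w # ws)) (apps (Mu (par_subst \<sigma> ?\<rho>' \<nu> t)) ws)"
    by (simp add: red_apps r_into_rtranclp)
  moreover have "\<forall>a. \<forall>x\<in>set (?\<rho>' a). mu_fresh 0 x"
    using Cons.prems by (simp add: mu_fresh_renameM_outside_range)
  moreover have "?\<rho>'(0 := ?\<rho>' 0 @ map (renameM Suc) ws) = \<rho>(0 := \<rho> 0 @ map (renameM Suc) (w # ws))"
    by simp
  ultimately show ?case
    using Cons.IH by (metis (no_types, lifting) rtranclp_trans)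
qed

lemma red_apps_par_subst_Mu:
  "red (apps (par_subst \<sigma> \<rho> \<nu> (Mu t)) ws)
     (Mu (par_subst (\<lambda>i. renameM Suc (\<sigma> i)) (cons_stack (map (renameM Suc) ws)
       (\<lambda>a. map (renameM Suc) (\<rho> a))) (up_ren \<nu>) t))"
proof -
  have "(cons_stack [] (\<lambda>a. map (renameM Suc) (\<rho> a)))
          (0 := cons_stack [] (\<lambda>a. map (renameM Suc) (\<rho> a)) 0 @ map (renameM Suc) ws)
      = cons_stack (map (renameM Suc) ws) (\<lambda>a. map (renameM Suc) (\<rho> a))"
    by (auto simp: fun_eq_iff cons_stack_def split: nat.splits)
  moreover have "red (apps (par_subst \<sigma> \<rho> \<nu> (Mu t)) ws)
      (Mu (par_subst (\<lambda>i. renameM Suc (\<sigma> i)) ((cons_stack [] (\<lambda>a. map (renameM Suc) (\<rho> a)))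
        (0 := cons_stack [] (\<lambda>a. map (renameM Suc) (\<rho> a)) 0 @ map (renameM Suc) ws)) (up_ren \<nu>) t))"
    unfolding par_subst.simps
    by (rule red_apps_Mu_par_subst)
       (auto simp: cons_stack_def up_ren_def mu_fresh_renameM_outside_range split: nat.splits)
  ultimately show ?thesis by simp
qed

lemma par_subst_id:
  "typing \<Gamma> \<Delta> t A \<Longrightarrow> \<forall>i<length \<Gamma>. \<sigma> i = Var i \<Longrightarrow> \<forall>a<length \<Delta>. \<rho> a = [] \<and> \<nu> a = a
   \<Longrightarrow> par_subst \<sigma> \<rho> \<nu> t = t"
proof (induction \<Gamma> \<Delta> t A arbitrary: \<sigma> \<rho> \<nu> rule: typing.induct)
  case (arrI A \<Gamma> \<Delta> t B)
  have "\<forall>i<length (A # \<Gamma>). cons_subst (Var 0) (\<lambda>i. liftL 0 (\<sigma> i)) i = Var i"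
    using arrI.prems(1) by (auto simp: cons_subst_def split: nat.splits)
  moreover have "\<forall>a<length \<Delta>. map (liftL 0) (\<rho> a) = [] \<and> \<nu> a = a"
    using arrI.prems(2) by auto
  ultimately show ?case using arrI.IH by simp
next
  case (muI \<Gamma> A \<Delta> t)
  have "\<forall>i<length \<Gamma>. renameM Suc (\<sigma> i) = Var i"
    using muI.prems(1) by auto
  moreover have "\<forall>a<length (A # \<Delta>). cons_stack [] (\<lambda>a. map (renameM Suc) (\<rho> a)) a = [] \<and> up_ren \<nu> a = a"
    using muI.prems(2) by (auto simp: cons_stack_def up_ren_def split: nat.splits)
  ultimately show ?case using muI.IH by simp
qed auto

lemma substL_typing: "typing \<Gamma> \<Delta> t A \<Longrightarrow> length \<Gamma> \<le> k \<Longrightarrow> substL k s t = t"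
  by (induction \<Gamma> \<Delta> t A arbitrary: k s rule: typing.induct) auto

subsection \<open>Realizability\<close>

lemma inM_Var_renameM: "inM (Var i) w \<Longrightarrow> inM (Var i) (renameM r w)"
  by (induction "Var i" w arbitrary: r rule: inM.induct)
    (simp_all add: inM.base inM.named inM.mu [of "Var i", simplified])

lemma inM_Var_substL: "inM (Var k) w \<Longrightarrow> inM s (substL k s w)"
  by (induction "Var k" w arbitrary: s rule: inM.induct)
    (auto intro: inM.base inM.named inM.mu [unfolded liftM_0])

text \<open>The \<lambda>-variable \<open>0\<close> plays the role of the fresh variable \<open>x\<close> for which \<open>u\<close> is
substituted at the end.\<close>

definition pole :: "trm set" where
  "pole = {t. \<exists>w. inM (Var 0) w \<and> red t w}"

lemma Var_0_in_pole: "Var 0 \<in> pole"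
  by (auto simp: pole_def intro: inM.base)

lemma pole_red: "red t t' \<Longrightarrow> t' \<in> pole \<Longrightarrow> t \<in> pole"
  by (auto simp: pole_def intro: rtranclp_trans)

lemma pole_Named: "t \<in> pole \<Longrightarrow> Named a t \<in> pole"
  by (auto simp: pole_def intro: red_Named inM.named)

lemma pole_Mu: "t \<in> pole \<Longrightarrow> Mu t \<in> pole"
  using inM.mu [of "Var 0"] by (auto simp: pole_def intro: red_Mu)

lemma pole_renameM: "t \<in> pole \<Longrightarrow> renameM r t \<in> pole"
  by (auto simp: pole_def intro: red_renameM inM_Var_renameM)

lemma pole_substL: "t \<in> pole \<Longrightarrow> \<exists>w. inM u w \<and> red (substL 0 u t) w"
  by (auto simp: pole_def intro: red_substL inM_Var_substL)

text \<open>Realizers are required to stay realizers under every renaming of \<mu>-variables, because going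
under a \<open>\<mu>\<close>-binder shifts the \<mu>-indices of the substituted terms.\<close>

fun realizer_set :: "ty \<Rightarrow> trm set" where
  "realizer_set Bot = pole"
| "realizer_set (PV n) = {t. \<forall>r vs. apps (renameM r t) vs \<in> pole}"
| "realizer_set (Arr A B) = {t. \<forall>r. \<forall>s\<in>realizer_set A. App (renameM r t) s \<in> realizer_set B}"

fun stack_set :: "ty \<Rightarrow> trm list set" where
  "stack_set Bot = {[]}"
| "stack_set (PV n) = UNIV"
| "stack_set (Arr A B) = {s # ws | s ws. s \<in> realizer_set A \<and> ws \<in> stack_set B}"

lemma realizer_set_renameM: "t \<in> realizer_set A \<Longrightarrow> renameM r t \<in> realizer_set A"
  by (cases A) (auto simp: pole_renameM renameM_renameM)

lemma stack_set_renameM: "ws \<in> stack_set A \<Longrightarrow> map (renameM r) ws \<in> stack_set A"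
  by (induction A arbitrary: ws) (auto intro: realizer_set_renameM)

lemma realizer_set_apps_stack: "t \<in> realizer_set A \<Longrightarrow> ws \<in> stack_set A \<Longrightarrow> apps t ws \<in> pole"
proof (induction A arbitrary: t ws)
  case (PV n)
  then show ?case by (auto dest: spec [of _ "\<lambda>a. a"])
next
  case (Arr A B)
  then obtain s ws' where "ws = s # ws'" and "s \<in> realizer_set A" and "ws' \<in> stack_set B"
    by auto
  moreover from this Arr.prems have "App t s \<in> realizer_set B"
    by (auto dest: spec [of _ "\<lambda>a. a"])
  ultimately show ?case using Arr.IH(2) by simp
qed simp

lemma realizer_setI:
  "(\<And>r ws. ws \<in> stack_set A \<Longrightarrow> apps (renameM r t) ws \<in> pole) \<Longrightarrow> t \<in> realizer_set A"
proof (induction A arbitrary: t)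
  case Bot
  then show ?case using Bot.prems [of "[]" "\<lambda>a. a"] by simp
next
  case (Arr A B)
  show ?case
  proof (simp only: realizer_set.simps mem_Collect_eq, intro allI ballI)
    fix r s
    assume s: "s \<in> realizer_set A"
    show "App (renameM r t) s \<in> realizer_set B"
    proof (rule Arr.IH(2))
      fix r' ws
      assume "ws \<in> stack_set B"
      with s have "renameM r' s # ws \<in> stack_set (Arr A B)"
        by (auto intro: realizer_set_renameM)
      then have "apps (renameM (r' \<circ> r) t) (renameM r' s # ws) \<in> pole"
        by (rule Arr.prems)
      then show "apps (renameM r' (App (renameM r t) s)) ws \<in> pole"
        by (simp add: renameM_renameM)
    qed
  qed
qed simp

lemma realizer_set_red: "red t t' \<Longrightarrow> t' \<in> realizer_set A \<Longrightarrow> t \<in> realizer_set A"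
proof (rule realizer_setI)
  fix r ws
  assume "red t t'" and "t' \<in> realizer_set A" and "ws \<in> stack_set A"
  then show "apps (renameM r t) ws \<in> pole"
    by (meson pole_red realizer_set_apps_stack realizer_set_renameM red_apps red_renameM)
qed

subsection \<open>Adequacy\<close>

lemma par_subst_Lam_realizer:
  assumes "\<And>r s. s \<in> realizer_set A \<Longrightarrow>
    par_subst (cons_subst s (\<lambda>i. renameM r (\<sigma> i))) (\<lambda>a. map (renameM r) (\<rho> a)) (\<lambda>a. r (\<nu> a)) t
      \<in> realizer_set B"
  shows "par_subst \<sigma> \<rho> \<nu> (Lam t) \<in> realizer_set (Arr A B)"
proof (simp only: realizer_set.simps mem_Collect_eq, intro allI ballI)
  fix r s
  assume "s \<in> realizer_set A"
  moreover have "red (App (renameM r (par_subst \<sigma> \<rho> \<nu> (Lam t))) s)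
      (par_subst (cons_subst s (\<lambda>i. renameM r (\<sigma> i))) (\<lambda>a. map (renameM r) (\<rho> a)) (\<lambda>a. r (\<nu> a)) t)"
    unfolding renameM_par_subst by (rule r_into_rtranclp, rule red1_App_par_subst_Lam)
  ultimately show "App (renameM r (par_subst \<sigma> \<rho> \<nu> (Lam t))) s \<in> realizer_set B"
    using assms realizer_set_red by blast
qed

lemma par_subst_Mu_realizer:
  assumes "\<And>r ws. ws \<in> stack_set A \<Longrightarrow>
    par_subst (\<lambda>i. renameM Suc (renameM r (\<sigma> i)))
      (cons_stack (map (renameM Suc) ws) (\<lambda>a. map (renameM Suc) (map (renameM r) (\<rho> a))))
      (up_ren (\<lambda>a. r (\<nu> a))) t \<in> pole"
  shows "par_subst \<sigma> \<rho> \<nu> (Mu t) \<in> realizer_set A"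
proof (rule realizer_setI)
  fix r ws
  assume "ws \<in> stack_set A"
  then show "apps (renameM r (par_subst \<sigma> \<rho> \<nu> (Mu t))) ws \<in> pole"
    unfolding renameM_par_subst using red_apps_par_subst_Mu assms pole_Mu pole_red by blast
qed

lemma adequacy:
  assumes "typing \<Gamma> \<Delta> t A"
    and "\<forall>i<length \<Gamma>. \<sigma> i \<in> realizer_set (\<Gamma> ! i)"
    and "\<forall>a<length \<Delta>. \<rho> a \<in> stack_set (\<Delta> ! a)"
  shows "par_subst \<sigma> \<rho> \<nu> t \<in> realizer_set A"
  using assms
proof (induction \<Gamma> \<Delta> t A arbitrary: \<sigma> \<rho> \<nu> rule: typing.induct)
  case (ax i \<Gamma> A \<Delta>)
  then show ?case by auto
next
  case (arrI A \<Gamma> \<Delta> t B)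
  show ?case
  proof (rule par_subst_Lam_realizer)
    fix r s
    assume "s \<in> realizer_set A"
    with arrI.prems show "par_subst (cons_subst s (\<lambda>i. renameM r (\<sigma> i))) (\<lambda>a. map (renameM r) (\<rho> a))
        (\<lambda>a. r (\<nu> a)) t \<in> realizer_set B"
      by (intro arrI.IH)
        (auto simp: cons_subst_def realizer_set_renameM stack_set_renameM split: nat.splits)
  qed
next
  case (arrE \<Gamma> \<Delta> u A B v)
  then have "par_subst \<sigma> \<rho> \<nu> u \<in> realizer_set (Arr A B)" and "par_subst \<sigma> \<rho> \<nu> v \<in> realizer_set A"
    by blast+
  then show ?case by (auto dest: spec [of _ "\<lambda>a. a"])
next
  case (muI \<Gamma> A \<Delta> t)
  show ?case
  proof (rule par_subst_Mu_realizer)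
    fix r ws
    assume "ws \<in> stack_set A"
    with muI.prems show "par_subst (\<lambda>i. renameM Suc (renameM r (\<sigma> i)))
        (cons_stack (map (renameM Suc) ws) (\<lambda>a. map (renameM Suc) (map (renameM r) (\<rho> a))))
        (up_ren (\<lambda>a. r (\<nu> a))) t \<in> pole"
      by (intro muI.IH [simplified])
        (auto simp del: map_map simp: cons_stack_def realizer_set_renameM stack_set_renameM
          split: nat.splits)
  qed
next
  case (botI a \<Delta> A \<Gamma> t)
  then have "par_subst \<sigma> \<rho> \<nu> t \<in> realizer_set A" and "\<rho> a \<in> stack_set A"
    by auto
  then show ?case by (simp add: realizer_set_apps_stack pole_Named)
qed

lemma typing_Nil_realizer: "typing [] [] t A \<Longrightarrow> t \<in> realizer_set A"
  using adequacy [of "[]" "[]" t A Var "\<lambda>_. []" "\<lambda>a. a"] par_subst_id [of "[]" "[]" t A] by simp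

theorem mainTheorem8:
  fixes e u :: trm and vs :: "trm list" and X :: nat
  assumes "closed e"
    and "typing [] [] e (Arr Bot (PV X))"
  shows "\<exists>w. inM u w \<and> red (apps (App e u) vs) w"
proof -
  have "apps e (Var 0 # map (liftL 0) vs) \<in> pole"
    using typing_Nil_realizer [OF assms(2)] by (rule realizer_set_apps_stack) (simp add: Var_0_in_pole)
  then obtain w where "inM u w" and "red (substL 0 u (apps e (Var 0 # map (liftL 0) vs))) w"
    using pole_substL by blast
  moreover have "substL 0 u (apps e (Var 0 # map (liftL 0) vs)) = apps (App e u) vs"
    using substL_typing [OF assms(2), of 0 u] by (simp add: substL_apps comp_def substL_liftL)
  ultimately show ?thesis by auto
qed

end
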